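(* (a) If $\tau\in\mathcal{T}$ and the space $(\mathbb{R},\tau)$ is connected and locally connected, then $\tau=\eta$. (b) More precisely: if $\xi\in\Gamma(\tau)$ for some $\tau\in\mathcal{T}$ and $(\mathbb{R},\tau)$ is connected, then $\xi$ does not have a local basis consisting of connected sets in the space $(\mathbb{R},\tau)$.
   Context: $\eta$ denotes the Euclidean topology on $\mathbb{R}$; $\mathcal{T}$ is the family of all topologies on $\mathbb{R}$ finer than $\eta$. $\mathcal{U}_\tau(x)$ is the neighborhood filter of $x$ in topology $\tau$, and $\Gamma(\tau)=\{x\in\mathbb{R}:\mathcal{U}_\eta(x)\neq\mathcal{U}_\tau(x)\}$ (the points where $\tau$ is strictly finer than $\eta$). *)

theory Defs
  imports "HOL-Analysis.Analysis"
begin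

definition finer_than_euclidean :: "real topology \<Rightarrow> bool" where
  "finer_than_euclidean \<tau> \<longleftrightarrow> topspace \<tau> = UNIV \<and> (\<forall>U. open U \<longrightarrow> openin \<tau> U)"

definition nhds_sets :: "'a topology \<Rightarrow> 'a \<Rightarrow> 'a set set" where
  "nhds_sets \<tau> x = {N. \<exists>U. openin \<tau> U \<and> x \<in> U \<and> U \<subseteq> N}"

text \<open>Gamma(tau): points where the neighbourhood filters of eta and tau differ.\<close>
definition Gamma_set :: "real topology \<Rightarrow> real set" where
  "Gamma_set \<tau> = {x. nhds_sets euclideanreal x \<noteq> nhds_sets \<tau> x}"

definition has_connected_local_basis :: "'a topology \<Rightarrow> 'a \<Rightarrow> bool" where
  "has_connected_local_basis \<tau> x \<longleftrightarrow>
     (\<exists>B. B \<subseteq> nhds_sets \<tau> x \<and> (\<forall>C\<in>B. connectedin \<tau> C) \<and>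
          (\<forall>N\<in>nhds_sets \<tau> x. \<exists>C\<in>B. C \<subseteq> N))"

end

theory Submission
  imports Defs
begin

text \<open>Let \<open>\<tau>\<close> be a connected topology finer than the Euclidean one. Every \<open>\<tau>\<close>-open set
  containing \<open>\<xi>\<close> meets both half-lines \<open>(-\<infinity>, \<xi>)\<close> and \<open>(\<xi>, \<infinity>)\<close>: if it missed
  \<open>(-\<infinity>, \<xi>)\<close>, then \<open>(-\<infinity>, \<xi>)\<close> and its union with \<open>(\<xi>, \<infinity>)\<close> would disconnect \<open>\<tau>\<close>.
  A \<open>\<tau>\<close>-connected set is connected in the Euclidean sense, i.e. an interval, so a
  \<open>\<tau>\<close>-connected \<open>\<tau>\<close>-neighbourhood of \<open>\<xi>\<close> contains points on both sides of \<open>\<xi>\<close> and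
  hence a Euclidean neighbourhood of \<open>\<xi>\<close>. Therefore a point with a connected local base
  has the same neighbourhoods in \<open>\<tau>\<close> as in the Euclidean topology.\<close>

lemma finer_than_euclidean_openin:
  assumes "finer_than_euclidean \<tau>" and "open S"
  shows "openin \<tau> S"
  using assms unfolding finer_than_euclidean_def by blast

lemma finer_than_euclidean_topspace:
  "finer_than_euclidean \<tau> \<Longrightarrow> topspace \<tau> = UNIV"
  unfolding finer_than_euclidean_def by blast

lemma nhds_sets_euclideanreal:
  "N \<in> nhds_sets euclideanreal x \<longleftrightarrow> (\<exists>e>0. ball x e \<subseteq> N)"
proof
  assume "N \<in> nhds_sets euclideanreal x"
  then obtain U where "open U" "x \<in> U" "U \<subseteq> N"
    unfolding nhds_sets_def by auto
  then show "\<exists>e>0. ball x e \<subseteq> N"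
    by (meson open_contains_ball order_trans)
next
  assume "\<exists>e>0. ball x e \<subseteq> N"
  then obtain e where "e > 0" "ball x e \<subseteq> N"
    by blast
  then show "N \<in> nhds_sets euclideanreal x"
    unfolding nhds_sets_def by (intro CollectI exI[of _ "ball x e"]) simp
qed

lemma nhds_sets_euclideanreal_subset:
  assumes "finer_than_euclidean \<tau>"
  shows "nhds_sets euclideanreal x \<subseteq> nhds_sets \<tau> x"
  using finer_than_euclidean_openin[OF assms] unfolding nhds_sets_def by auto

lemma connectedin_finer_than_euclidean_imp_connected:
  assumes "finer_than_euclidean \<tau>" and "connectedin \<tau> C"
  shows "connected C"
proof -
  have "continuous_map \<tau> euclideanreal id"
    using finer_than_euclidean_topspace[OF assms(1)] finer_than_euclidean_openin[OF assms(1)]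
    unfolding continuous_map_def by (auto simp: vimage_def)
  from connectedin_continuous_map_image[OF this assms(2)] show ?thesis
    by simp
qed

lemma connected_space_finer_than_euclidean_openin_meets:
  assumes "finer_than_euclidean \<tau>" and "connected_space \<tau>"
    and "openin \<tau> V" and "\<xi> \<in> V"
    and "open L" and "open R" and "L \<noteq> {}" and "L \<inter> R = {}" and "L \<union> insert \<xi> R = UNIV"
  shows "V \<inter> L \<noteq> {}"
proof
  assume "V \<inter> L = {}"
  then have "L \<inter> (V \<union> R) = {}"
    using assms(8) by blast
  moreover have "topspace \<tau> \<subseteq> L \<union> (V \<union> R)"
    using assms(4,9) finer_than_euclidean_topspace[OF assms(1)] by auto
  moreover have "openin \<tau> L" "openin \<tau> (V \<union> R)"
    using assms(1,3,5,6) finer_than_euclidean_openin by auto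
  moreover have "V \<union> R \<noteq> {}"
    using assms(4) by blast
  ultimately show False
    using assms(2,7) unfolding connected_space_def by meson
qed

lemma connectedin_nhds_sets_imp_euclidean_nhds_sets:
  assumes fin: "finer_than_euclidean \<tau>" and con: "connected_space \<tau>"
    and C: "C \<in> nhds_sets \<tau> \<xi>" "connectedin \<tau> C"
  shows "C \<in> nhds_sets euclideanreal \<xi>"
proof -
  obtain V where V: "openin \<tau> V" "\<xi> \<in> V" "V \<subseteq> C"
    using C(1) unfolding nhds_sets_def by blast
  have halflines: "{..<\<xi>} \<inter> {\<xi><..} = {}" "{\<xi><..} \<inter> {..<\<xi>} = {}"
    "{..<\<xi>} \<union> insert \<xi> {\<xi><..} = UNIV" "{\<xi><..} \<union> insert \<xi> {..<\<xi>} = UNIV"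
    by (auto simp: neq_iff)
  have "V \<inter> {..<\<xi>} \<noteq> {}"
    using connected_space_finer_than_euclidean_openin_meets
        [OF fin con V(1,2), where L = "{..<\<xi>}" and R = "{\<xi><..}"] halflines lt_ex[of \<xi>]
    by auto
  then obtain a where a: "a \<in> C" "a < \<xi>"
    using V(3) by blast
  have "V \<inter> {\<xi><..} \<noteq> {}"
    using connected_space_finer_than_euclidean_openin_meets
        [OF fin con V(1,2), where L = "{\<xi><..}" and R = "{..<\<xi>}"] halflines gt_ex[of \<xi>]
    by auto
  then obtain b where b: "b \<in> C" "\<xi> < b"
    using V(3) by blast
  have "ball \<xi> (min (\<xi> - a) (b - \<xi>)) \<subseteq> {a..b}"
    by (auto simp: ball_def dist_real_def)
  also have "{a..b} \<subseteq> C"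
    using connected_contains_Icc[OF connectedin_finer_than_euclidean_imp_connected[OF fin C(2)]]
      a b by blast
  finally have "ball \<xi> (min (\<xi> - a) (b - \<xi>)) \<subseteq> C" .
  moreover have "min (\<xi> - a) (b - \<xi>) > 0"
    using a b by simp
  ultimately show ?thesis
    unfolding nhds_sets_euclideanreal by blast
qed

lemma connected_local_basis_imp_notin_Gamma_set:
  assumes fin: "finer_than_euclidean \<tau>" and con: "connected_space \<tau>"
    and "has_connected_local_basis \<tau> \<xi>"
  shows "\<xi> \<notin> Gamma_set \<tau>"
proof -
  obtain B where B: "B \<subseteq> nhds_sets \<tau> \<xi>" "\<forall>C\<in>B. connectedin \<tau> C"
    "\<forall>N\<in>nhds_sets \<tau> \<xi>. \<exists>C\<in>B. C \<subseteq> N"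
    using assms(3) unfolding has_connected_local_basis_def by blast
  have "nhds_sets \<tau> \<xi> \<subseteq> nhds_sets euclideanreal \<xi>"
  proof
    fix N assume "N \<in> nhds_sets \<tau> \<xi>"
    then obtain C where "C \<in> B" "C \<subseteq> N"
      using B(3) by blast
    then have "C \<in> nhds_sets euclideanreal \<xi>"
      using connectedin_nhds_sets_imp_euclidean_nhds_sets[OF fin con] B(1,2) by blast
    with \<open>C \<subseteq> N\<close> show "N \<in> nhds_sets euclideanreal \<xi>"
      unfolding nhds_sets_def by blast
  qed
  then show ?thesis
    using nhds_sets_euclideanreal_subset[OF fin] unfolding Gamma_set_def by (simp add: subset_antisym)
qed

lemma locally_connected_space_imp_connected_local_basis:
  assumes "locally_connected_space \<tau>"
  shows "has_connected_local_basis \<tau> x"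
  unfolding has_connected_local_basis_def
proof (intro exI conjI ballI)
  fix N assume "N \<in> nhds_sets \<tau> x"
  then obtain W where "openin \<tau> W" "x \<in> W" "W \<subseteq> N"
    unfolding nhds_sets_def by blast
  moreover obtain U where "openin \<tau> U" "connectedin \<tau> U" "x \<in> U" "U \<subseteq> W"
    using assms \<open>openin \<tau> W\<close> \<open>x \<in> W\<close> unfolding locally_connected_space by blast
  ultimately show "\<exists>C\<in>{C \<in> nhds_sets \<tau> x. connectedin \<tau> C}. C \<subseteq> N"
    unfolding nhds_sets_def by blast
qed auto

lemma Gamma_set_empty_imp_euclideanreal:
  assumes fin: "finer_than_euclidean \<tau>" and "Gamma_set \<tau> = {}"
  shows "\<tau> = euclideanreal"
  unfolding topology_eq
proof (intro allI iffI)
  fix S assume "openin \<tau> S"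
  then have "S \<in> nhds_sets \<tau> x" if "x \<in> S" for x
    using that unfolding nhds_sets_def by blast
  moreover have "nhds_sets \<tau> x = nhds_sets euclideanreal x" for x
    using assms(2) unfolding Gamma_set_def by blast
  ultimately have "S \<in> nhds_sets euclideanreal x" if "x \<in> S" for x
    using that by simp
  then show "openin euclideanreal S"
    unfolding nhds_sets_euclideanreal by (simp add: open_contains_ball)
qed (use finer_than_euclidean_openin[OF fin] in simp)

theorem proposition1:
  shows "(\<forall>\<tau>. finer_than_euclidean \<tau> \<and> connected_space \<tau> \<and> locally_connected_space \<tau>
            \<longrightarrow> \<tau> = euclideanreal)
       \<and> (\<forall>\<tau> \<xi>. finer_than_euclidean \<tau> \<and> \<xi> \<in> Gamma_set \<tau> \<and> connected_space \<tau>
            \<longrightarrow> \<not> has_connected_local_basis \<tau> \<xi>)"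
proof (intro conjI allI impI)
  fix \<tau> :: "real topology"
  assume \<tau>: "finer_than_euclidean \<tau> \<and> connected_space \<tau> \<and> locally_connected_space \<tau>"
  then have "x \<notin> Gamma_set \<tau>" for x
    by (simp add: connected_local_basis_imp_notin_Gamma_set
        locally_connected_space_imp_connected_local_basis)
  with \<tau> show "\<tau> = euclideanreal"
    using Gamma_set_empty_imp_euclideanreal by blast
next
  fix \<tau> :: "real topology" and \<xi> :: real
  assume "finer_than_euclidean \<tau> \<and> \<xi> \<in> Gamma_set \<tau> \<and> connected_space \<tau>"
  then show "\<not> has_connected_local_basis \<tau> \<xi>"
    using connected_local_basis_imp_notin_Gamma_set by blast
qed

end
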